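(* Let $E$ be a $\sigma$-unital $C^*$-algebra and let $L\subseteq M(E)$ be a separable sub-$C^*$-algebra. Then there exists a separable sub-$C^*$-algebra $D\subseteq E$ containing an approximate unit for $E$ such that the image of the naturally induced unital injective $*$-homomorphism $M(D)\to M(E)$ contains $L$.
   Context: If $D\subseteq E$ is a sub-$C^*$-algebra containing an approximate unit of $E$, the inclusion $D\to E$ induces a unital injective $*$-homomorphism $M(D)\to M(E)$ (realizing $M(D)=\{x\in D^{**}:xD+Dx\subseteq D\}\subseteq D^{**}\subseteq E^{**}$ and similarly for $E$). *)

theory Defs
  imports "HOL-Analysis.Analysis"
begin

text \<open>A (possibly non-unital) C*-algebra structure on a type: the type is a real Banach
algebra, equipped with a complex scalar multiplication sc (extending the real one)
and an involution adj satisfying the C*-identity.\<close>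

definition cstar_algebra ::
  "(complex \<Rightarrow> 'a::{banach,real_normed_algebra} \<Rightarrow> 'a) \<Rightarrow> ('a \<Rightarrow> 'a) \<Rightarrow> bool" where
  "cstar_algebra sc adj \<longleftrightarrow>
     (\<forall>r x. sc (complex_of_real r) x = scaleR r x) \<and>
     (\<forall>a x y. sc a (x + y) = sc a x + sc a y) \<and>
     (\<forall>a b x. sc (a + b) x = sc a x + sc b x) \<and>
     (\<forall>a b x. sc (a * b) x = sc a (sc b x)) \<and>
     (\<forall>a x y. sc a (x * y) = sc a x * y \<and> sc a (x * y) = x * sc a y) \<and>
     (\<forall>a x. norm (sc a x) = cmod a * norm x) \<and>
     (\<forall>x. adj (adj x) = x) \<and>
     (\<forall>x y. adj (x + y) = adj x + adj y) \<and>
     (\<forall>x y. adj (x * y) = adj y * adj x) \<and>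
     (\<forall>a x. adj (sc a x) = sc (cnj a) (adj x)) \<and>
     (\<forall>x. norm (adj x * x) = (norm x)\<^sup>2)"

definition csub ::
  "(complex \<Rightarrow> 'a::{banach,real_normed_algebra} \<Rightarrow> 'a) \<Rightarrow> ('a \<Rightarrow> 'a) \<Rightarrow> 'a set \<Rightarrow> bool" where
  "csub sc adj D \<longleftrightarrow> 0 \<in> D \<and>
     (\<forall>x\<in>D. \<forall>y\<in>D. x + y \<in> D \<and> x * y \<in> D) \<and>
     (\<forall>x\<in>D. adj x \<in> D \<and> (\<forall>c. sc c x \<in> D)) \<and> closed D"

definition separable_set :: "'a::metric_space set \<Rightarrow> bool" where
  "separable_set D \<longleftrightarrow> (\<exists>C. countable C \<and> C \<subseteq> D \<and> D \<subseteq> closure C)"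

definition positive_elem :: "('a::real_normed_algebra \<Rightarrow> 'a) \<Rightarrow> 'a \<Rightarrow> bool" where
  "positive_elem adj u \<longleftrightarrow> (\<exists>v. u = adj v * v)"

text \<open>D contains an approximate unit for the ambient algebra: a net of positive contractions
in D (encoded as a proper filter on elements) with u x \<rightarrow> x and x u \<rightarrow> x for every x.\<close>
definition contains_approx_unit ::
  "('a::{banach,real_normed_algebra} \<Rightarrow> 'a) \<Rightarrow> 'a set \<Rightarrow> bool" where
  "contains_approx_unit adj D \<longleftrightarrow>
     (\<exists>F::'a filter. F \<noteq> bot \<and>
        eventually (\<lambda>u. u \<in> D \<and> positive_elem adj u \<and> norm u \<le> 1) F \<and>
        (\<forall>x. ((\<lambda>u. u * x) \<longlongrightarrow> x) F \<and> ((\<lambda>u. x * u) \<longlongrightarrow> x) F))"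

definition sigma_unital :: "('a::{banach,real_normed_algebra} \<Rightarrow> 'a) \<Rightarrow> bool" where
  "sigma_unital adj \<longleftrightarrow>
     (\<exists>u::nat \<Rightarrow> 'a. (\<forall>n. positive_elem adj (u n) \<and> norm (u n) \<le> 1) \<and>
        (\<forall>x. (\<lambda>n. u n * x) \<longlonglongrightarrow> x \<and> (\<lambda>n. x * u n) \<longlonglongrightarrow> x))"

text \<open>Multiplier algebra M(D) of a sub-C*-algebra D, as double centralizers (L,R) on D
(maps are normalised to 0 outside D).\<close>
type_synonym 'a mult = "('a \<Rightarrow> 'a) \<times> ('a \<Rightarrow> 'a)"

definition multipliers :: "'a::real_normed_algebra set \<Rightarrow> 'a mult set" where
  "multipliers D = {(Lm, Rm).
      (\<forall>x\<in>D. Lm x \<in> D \<and> Rm x \<in> D) \<and>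
      (\<forall>x\<in>D. \<forall>y\<in>D. x * Lm y = Rm x * y) \<and>
      (\<forall>x. x \<notin> D \<longrightarrow> Lm x = 0 \<and> Rm x = 0)}"

text \<open>The natural map M(D) \<rightarrow> M(E) (E = UNIV): the multiplier of E agreeing with the
given one on D.\<close>
definition induced_mult :: "'a::real_normed_algebra set \<Rightarrow> 'a mult \<Rightarrow> 'a mult" where
  "induced_mult D m = (THE m'. m' \<in> multipliers UNIV \<and>
      (\<forall>d\<in>D. fst m' d = fst m d \<and> snd m' d = snd m d))"

definition madd :: "'a::real_normed_algebra mult \<Rightarrow> 'a mult \<Rightarrow> 'a mult" where
  "madd m n = ((\<lambda>x. fst m x + fst n x), (\<lambda>x. snd m x + snd n x))"
definition msc :: "(complex \<Rightarrow> 'a \<Rightarrow> 'a) \<Rightarrow> complex \<Rightarrow> 'a mult \<Rightarrow> 'a mult" where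
  "msc sc c m = ((\<lambda>x. sc c (fst m x)), (\<lambda>x. sc c (snd m x)))"
definition mmul :: "'a mult \<Rightarrow> 'a mult \<Rightarrow> 'a mult" where
  "mmul m n = (fst m \<circ> fst n, snd n \<circ> snd m)"
definition madj :: "('a \<Rightarrow> 'a) \<Rightarrow> 'a mult \<Rightarrow> 'a mult" where
  "madj adj m = (adj \<circ> snd m \<circ> adj, adj \<circ> fst m \<circ> adj)"
definition mnorm :: "'a::real_normed_vector mult \<Rightarrow> real" where
  "mnorm m = onorm (fst m)"
definition mdist :: "'a::real_normed_vector mult \<Rightarrow> 'a mult \<Rightarrow> real" where
  "mdist m n = mnorm ((\<lambda>x. fst m x - fst n x), (\<lambda>x. snd m x - snd n x))"

definition msub ::
  "(complex \<Rightarrow> 'a::{banach,real_normed_algebra} \<Rightarrow> 'a) \<Rightarrow> ('a \<Rightarrow> 'a) \<Rightarrow> 'a mult set \<Rightarrow> bool" where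
  "msub sc adj L \<longleftrightarrow> L \<subseteq> multipliers UNIV \<and> (\<lambda>_. 0, \<lambda>_. 0) \<in> L \<and>
     (\<forall>m\<in>L. \<forall>n\<in>L. madd m n \<in> L \<and> mmul m n \<in> L) \<and>
     (\<forall>m\<in>L. madj adj m \<in> L \<and> (\<forall>c. msc sc c m \<in> L)) \<and>
     (\<forall>s m. (\<forall>k. s k \<in> L) \<longrightarrow> m \<in> multipliers UNIV \<longrightarrow>
            (\<lambda>k. mdist (s k) m) \<longlonglongrightarrow> 0 \<longrightarrow> m \<in> L)"

definition mseparable :: "'a::real_normed_vector mult set \<Rightarrow> bool" where
  "mseparable L \<longleftrightarrow> (\<exists>C. countable C \<and> C \<subseteq> L \<and>
     (\<forall>m\<in>L. \<forall>e>0. \<exists>c\<in>C. mdist m c < e))"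

end

theory Submission
  imports Defs
begin

text \<open>Let \<open>u\<close> be a sequential approximate unit of \<open>E\<close> and \<open>C\<close> a countable dense subset of \<open>L\<close>.
Take for \<open>D\<close> the closure of the countable set generated by the \<open>u n\<close> under sums, products,
the involution, multiplication by \<open>\<i>\<close> and by rationals, and the left actions of the
elements of \<open>C\<close>. Then \<open>D\<close> is a separable sub-C*-algebra containing an approximate unit of
\<open>E\<close>. Every multiplier is a bounded operator by the uniform boundedness principle, so the
left action of each \<open>m \<in> L\<close> is a norm limit of left actions of elements of \<open>C\<close> and leaves
\<open>D\<close> invariant; the right action does too, being conjugate to the left action of the adjoint.
Hence \<open>m\<close> restricts to a multiplier of \<open>D\<close>, and since \<open>D\<close> contains an approximate unit of
\<open>E\<close>, that restriction is sent back to \<open>m\<close>.\<close>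

lemma norm_adj:
  assumes "cstar_algebra sc adj" shows "norm (adj x) = norm x"
proof -
  have le: "norm y \<le> norm (adj y)" for y
  proof (cases "y = 0")
    case False
    have "norm y * norm y = norm (adj y * y)"
      using assms unfolding cstar_algebra_def by (metis power2_eq_square)
    also have "\<dots> \<le> norm (adj y) * norm y" by (rule norm_mult_ineq)
    finally show ?thesis using False by simp
  qed simp
  have "adj (adj x) = x" using assms unfolding cstar_algebra_def by metis
  then show ?thesis using le[of x] le[of "adj x"] by simp
qed

lemma bounded_linear_adj:
  assumes "cstar_algebra sc adj" shows "bounded_linear adj"
proof (rule bounded_linear_intro[where K=1])
  show "adj (x + y) = adj x + adj y" for x y using assms unfolding cstar_algebra_def by metis
  show "adj (scaleR r x) = scaleR r (adj x)" for r x
  proof -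
    have "adj (scaleR r x) = adj (sc (complex_of_real r) x)"
      using assms unfolding cstar_algebra_def by metis
    also have "\<dots> = sc (cnj (complex_of_real r)) (adj x)"
      using assms unfolding cstar_algebra_def by metis
    also have "\<dots> = scaleR r (adj x)" using assms unfolding cstar_algebra_def by simp
    finally show ?thesis .
  qed
  show "norm (adj x) \<le> norm x * 1" for x using norm_adj[OF assms] by simp
qed

lemma bounded_linear_sc:
  assumes "cstar_algebra sc adj" shows "bounded_linear (sc c)"
proof (rule bounded_linear_intro[where K="cmod c"])
  show "sc c (x + y) = sc c x + sc c y" for x y using assms unfolding cstar_algebra_def by metis
  show "sc c (scaleR r x) = scaleR r (sc c x)" for r x
  proof -
    have "sc c (scaleR r x) = sc (c * complex_of_real r) x"
      using assms unfolding cstar_algebra_def by metis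
    also have "\<dots> = scaleR r (sc c x)"
      using assms unfolding cstar_algebra_def by (metis mult.commute)
    finally show ?thesis .
  qed
  show "norm (sc c x) \<le> norm x * cmod c" for x
    using assms unfolding cstar_algebra_def by (simp add: mult.commute)
qed

lemma sc_eq_Re_Im:
  assumes "cstar_algebra sc adj"
  shows "sc c x = scaleR (Re c) x + scaleR (Im c) (sc \<i> x)"
proof -
  have "sc c x = sc (complex_of_real (Re c) + complex_of_real (Im c) * \<i>) x"
    by (metis complex_eq mult.commute)
  also have "\<dots> = scaleR (Re c) x + scaleR (Im c) (sc \<i> x)"
    using assms unfolding cstar_algebra_def by metis
  finally show ?thesis .
qed

lemma Baire_closed_cover:
  fixes F :: "nat \<Rightarrow> 'a::complete_space set"
  assumes "\<And>k. closed (F k)" and "(\<Union>k. F k) = UNIV"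
  obtains k where "interior (F k) \<noteq> {}"
proof -
  have "\<exists>k. interior (F k) \<noteq> {}"
  proof (rule ccontr)
    assume "\<nexists>k. interior (F k) \<noteq> {}"
    then have "euclidean interior_of \<Union>(range F) = {}"
      by (intro Baire_category_alt) (auto simp: completely_metrizable_space_euclidean assms(1))
    with assms(2) show False by simp
  qed
  then show ?thesis using that by blast
qed

lemma bounded_linear_norm_bound_of_ball:
  assumes lin: "bounded_linear T" and "r > 0"
    and bound: "\<And>y. y \<in> ball x0 r \<Longrightarrow> norm (T y) \<le> k"
  shows "norm (T x) \<le> (4 * k / r) * norm x"
proof (cases "x = 0")
  case True then show ?thesis using linear_0[OF bounded_linear.linear[OF lin]] by simp
next
  case False
  have small: "norm (T y) \<le> 2 * k" if "norm y < r" for y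
  proof -
    have "norm (T (x0 + y)) \<le> k" "norm (T x0) \<le> k"
      using \<open>r > 0\<close> that by (auto intro: bound simp: dist_norm)
    moreover have "T y = T (x0 + y) - T x0" using linear_add[OF bounded_linear.linear[OF lin]] by simp
    ultimately show ?thesis by (metis norm_triangle_ineq4 order_trans add_mono mult_2)
  qed
  define t where "t = r / (2 * norm x)"
  have t: "t > 0" using \<open>r > 0\<close> False by (simp add: t_def)
  have "norm (scaleR t x) < r" using \<open>r > 0\<close> False by (simp add: t_def)
  then have "t * norm (T x) \<le> 2 * k"
    using small t linear_scale[OF bounded_linear.linear[OF lin]] by fastforce
  then have "norm (T x) \<le> 2 * k / t" using t by (simp add: field_simps)
  also have "\<dots> = (4 * k / r) * norm x" using \<open>r > 0\<close> False by (simp add: t_def field_simps)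
  finally show ?thesis .
qed

lemma uniform_boundedness:
  fixes T :: "'i \<Rightarrow> 'a::banach \<Rightarrow> 'b::real_normed_vector"
  assumes lin: "\<And>i. bounded_linear (T i)"
    and pointwise: "\<And>x. \<exists>B. \<forall>i. norm (T i x) \<le> B"
  shows "\<exists>K. \<forall>i x. norm (T i x) \<le> K * norm x"
proof -
  define F where "F k = {x. \<forall>i. norm (T i x) \<le> real k}" for k :: nat
  have "closed (F k)" for k
  proof -
    have "F k = (\<Inter>i. {x. norm (T i x) \<le> real k})" unfolding F_def by auto
    moreover have "continuous_on UNIV (T i)" for i
      using lin by (rule linear_continuous_on)
    ultimately show ?thesis
      by (auto intro!: closed_INT closed_Collect_le continuous_intros simp: continuous_on_eq_continuous_at)
  qed
  moreover have "(\<Union>k. F k) = UNIV"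
  proof -
    have "x \<in> (\<Union>k. F k)" for x
    proof -
      obtain B where "\<forall>i. norm (T i x) \<le> B" using pointwise by blast
      moreover obtain k :: nat where "B \<le> real k" using real_arch_simple by blast
      ultimately show ?thesis unfolding F_def by (auto intro: order_trans)
    qed
    then show ?thesis by blast
  qed
  ultimately obtain k where "interior (F k) \<noteq> {}"
    by (rule Baire_closed_cover)
  then obtain x0 r where "r > 0" "ball x0 r \<subseteq> F k"
    by (meson ex_in_conv open_contains_ball open_interior interior_subset subset_trans)
  then have "norm (T i x) \<le> (4 * real k / r) * norm x" for i x
    by (intro bounded_linear_norm_bound_of_ball[OF lin]) (auto simp: F_def)
  then show ?thesis by blast
qed

lemma multipliers_UNIV_mult: "m \<in> multipliers UNIV \<Longrightarrow> x * fst m y = snd m x * y"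
  by (cases m) (auto simp: multipliers_def)

lemma approx_unit_left_cancel:
  fixes u :: "nat \<Rightarrow> 'a::real_normed_algebra"
  assumes "\<And>x. (\<lambda>n. u n * x) \<longlonglongrightarrow> x" and "\<And>n. u n * a = u n * b"
  shows "a = b"
proof -
  have "(\<lambda>n. u n * a) \<longlonglongrightarrow> b" using assms by simp
  then show ?thesis using assms(1)[of a] LIMSEQ_unique by blast
qed

lemma approx_unit_right_cancel:
  fixes u :: "nat \<Rightarrow> 'a::real_normed_algebra"
  assumes "\<And>x. (\<lambda>n. x * u n) \<longlonglongrightarrow> x" and "\<And>n. a * u n = b * u n"
  shows "a = b"
proof -
  have "(\<lambda>n. a * u n) \<longlonglongrightarrow> b" using assms by simp
  then show ?thesis using assms(1)[of a] LIMSEQ_unique by blast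
qed

text \<open>The left action is the pointwise limit of the left multiplications by \<open>snd m (u n)\<close>,
which are uniformly bounded.\<close>

lemma bounded_linear_multiplier:
  fixes u :: "nat \<Rightarrow> 'a::{banach,real_normed_algebra}" and m :: "'a mult"
  assumes au: "\<And>x. (\<lambda>n. u n * x) \<longlonglongrightarrow> x" and m: "m \<in> multipliers UNIV"
  shows "bounded_linear (fst m)"
proof -
  have conv: "(\<lambda>n. snd m (u n) * x) \<longlonglongrightarrow> fst m x" for x
    using au[of "fst m x"] by (simp add: multipliers_UNIV_mult[OF m, symmetric])
  have "\<exists>B. \<forall>n. norm (snd m (u n) * x) \<le> B" for x
    using conv[of x] by (meson BseqE convergentI convergent_imp_Bseq)
  then obtain K where K: "\<And>n x. norm (snd m (u n) * x) \<le> K * norm x"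
    using uniform_boundedness[of "\<lambda>n x. snd m (u n) * x"] bounded_linear_mult_right by blast
  show ?thesis
  proof (rule bounded_linear_intro[where K=K])
    show "fst m (x + y) = fst m x + fst m y" for x y
      using approx_unit_left_cancel[OF au] multipliers_UNIV_mult[OF m] by (metis distrib_left)
    show "fst m (scaleR r x) = scaleR r (fst m x)" for r x
      using approx_unit_left_cancel[OF au] multipliers_UNIV_mult[OF m] by (metis mult_scaleR_right)
    show "norm (fst m x) \<le> norm x * K" for x
      using LIMSEQ_le_const2[OF tendsto_norm[OF conv]] K by (metis mult.commute)
  qed
qed

lemma multipliers_UNIV_eqI:
  fixes u :: "nat \<Rightarrow> 'a::real_normed_algebra"
  assumes auL: "\<And>x. (\<lambda>n. u n * x) \<longlonglongrightarrow> x" and auR: "\<And>x. (\<lambda>n. x * u n) \<longlonglongrightarrow> x"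
    and m: "m \<in> multipliers UNIV" and m': "m' \<in> multipliers UNIV"
    and agree: "\<And>n. fst m (u n) = fst m' (u n) \<and> snd m (u n) = snd m' (u n)"
  shows "m = m'"
proof -
  have "fst m x = fst m' x" for x
    using approx_unit_left_cancel[OF auL] multipliers_UNIV_mult[OF m] multipliers_UNIV_mult[OF m'] agree
    by metis
  moreover have "snd m x = snd m' x" for x
    using approx_unit_right_cancel[OF auR] multipliers_UNIV_mult[OF m] multipliers_UNIV_mult[OF m'] agree
    by metis
  ultimately show ?thesis by (simp add: prod_eq_iff fun_eq_iff)
qed

lemma multiplier_in_induced_image:
  fixes u :: "nat \<Rightarrow> 'a::real_normed_algebra"
  assumes auL: "\<And>x. (\<lambda>n. u n * x) \<longlonglongrightarrow> x" and auR: "\<And>x. (\<lambda>n. x * u n) \<longlonglongrightarrow> x"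
    and uD: "range u \<subseteq> D" and m: "m \<in> multipliers UNIV"
    and fstD: "fst m ` D \<subseteq> D" and sndD: "snd m ` D \<subseteq> D"
  shows "m \<in> induced_mult D ` multipliers D"
proof -
  define m0 where "m0 = ((\<lambda>x. if x \<in> D then fst m x else 0), (\<lambda>x. if x \<in> D then snd m x else 0))"
  have "m0 \<in> multipliers D"
    unfolding multipliers_def m0_def using fstD sndD multipliers_UNIV_mult[OF m] by auto
  moreover have "induced_mult D m0 = m"
    unfolding induced_mult_def
  proof (rule the_equality)
    show "m \<in> multipliers UNIV \<and> (\<forall>d\<in>D. fst m d = fst m0 d \<and> snd m d = snd m0 d)"
      using m by (simp add: m0_def)
    fix m' assume "m' \<in> multipliers UNIV \<and> (\<forall>d\<in>D. fst m' d = fst m0 d \<and> snd m' d = snd m0 d)"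
    then show "m' = m"
      by (intro multipliers_UNIV_eqI[OF auL auR]) (use m uD in \<open>auto simp: m0_def\<close>)
  qed
  ultimately show ?thesis by (metis image_eqI)
qed

lemma contains_approx_unit_seq:
  fixes u :: "nat \<Rightarrow> 'a::{banach,real_normed_algebra}"
  assumes "\<And>n. positive_elem adj (u n) \<and> norm (u n) \<le> 1" and "range u \<subseteq> D"
    and "\<And>x. (\<lambda>n. u n * x) \<longlonglongrightarrow> x" and "\<And>x. (\<lambda>n. x * u n) \<longlonglongrightarrow> x"
  shows "contains_approx_unit adj D"
  unfolding contains_approx_unit_def
proof (intro exI[of _ "filtermap u sequentially"] conjI allI)
  show "filtermap u sequentially \<noteq> bot" by (simp add: filtermap_bot_iff)
  show "eventually (\<lambda>v. v \<in> D \<and> positive_elem adj v \<and> norm v \<le> 1) (filtermap u sequentially)"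
    using assms(1,2) by (auto simp: eventually_filtermap intro!: always_eventually)
qed (use assms(3,4) in \<open>simp_all add: filterlim_filtermap\<close>)

text \<open>A unary operation \<open>f\<close> enters \<open>B\<close> as \<open>\<lambda>x _. f x\<close>.\<close>

definition gen_step :: "('a \<Rightarrow> 'a \<Rightarrow> 'a) set \<Rightarrow> 'a set \<Rightarrow> 'a set" where
  "gen_step B S = S \<union> (\<Union>b\<in>B. (\<lambda>(x, y). b x y) ` (S \<times> S))"

definition generated :: "('a \<Rightarrow> 'a \<Rightarrow> 'a) set \<Rightarrow> 'a set \<Rightarrow> 'a set" where
  "generated B G = (\<Union>k. (gen_step B ^^ k) G)"

lemma countable_generated:
  assumes "countable B" "countable G" shows "countable (generated B G)"
proof -
  have "countable ((gen_step B ^^ k) G)" for k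
    by (induction k) (use assms in \<open>simp_all add: gen_step_def\<close>)
  then show ?thesis unfolding generated_def by auto
qed

lemma generated_superset: "G \<subseteq> generated B G"
  unfolding generated_def by (metis UNIV_I UN_upper funpow_0)

lemma generated_closed:
  assumes "b \<in> B" "x \<in> generated B G" "y \<in> generated B G"
  shows "b x y \<in> generated B G"
proof -
  have "incseq (\<lambda>k. (gen_step B ^^ k) G)"
    by (rule incseq_SucI) (simp add: gen_step_def)
  moreover obtain i j where "x \<in> (gen_step B ^^ i) G" "y \<in> (gen_step B ^^ j) G"
    using assms(2,3) unfolding generated_def by blast
  ultimately have "x \<in> (gen_step B ^^ max i j) G" "y \<in> (gen_step B ^^ max i j) G"
    by (meson incseqD max.cobounded1 max.cobounded2 subsetD)+
  then have "b x y \<in> (gen_step B ^^ Suc (max i j)) G"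
    using assms(1) by (auto simp: gen_step_def)
  then show ?thesis unfolding generated_def by blast
qed

lemma closure_closed_under:
  assumes "continuous_on UNIV (\<lambda>p. f (fst p) (snd p))" and "\<And>x y. x \<in> A \<Longrightarrow> y \<in> B \<Longrightarrow> f x y \<in> C"
    and "x \<in> closure A" "y \<in> closure B"
  shows "f x y \<in> closure C"
proof -
  have "(\<lambda>p. f (fst p) (snd p)) ` closure (A \<times> B) \<subseteq> closure C"
    using assms(1,2) closure_subset[of C]
    by (intro image_closure_subset) (auto intro: continuous_on_subset)
  then show ?thesis using assms(3,4) by (auto simp: closure_Times image_subset_iff)
qed

lemma closure_invariant:
  assumes "continuous_on UNIV f" and "f ` A \<subseteq> A" and "x \<in> closure A"
  shows "f x \<in> closure A"
proof -
  have "f ` closure A \<subseteq> closure A"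
    using assms(1,2) closure_subset by (intro image_closure_subset) (auto intro: continuous_on_subset)
  then show ?thesis using assms(3) by blast
qed

lemma csub_closure:
  fixes P :: "'a::{banach,real_normed_algebra} set"
  assumes cs: "cstar_algebra sc adj" and "P \<noteq> {}"
    and add: "\<And>x y. x \<in> P \<Longrightarrow> y \<in> P \<Longrightarrow> x + y \<in> P"
    and mult: "\<And>x y. x \<in> P \<Longrightarrow> y \<in> P \<Longrightarrow> x * y \<in> P"
    and "adj ` P \<subseteq> P" and "sc \<i> ` P \<subseteq> P"
    and rat: "\<And>q x. x \<in> P \<Longrightarrow> scaleR (of_rat q) x \<in> P"
  shows "csub sc adj (closure P)"
proof -
  let ?D = "closure P"
  have addD: "x + y \<in> ?D" if "x \<in> ?D" "y \<in> ?D" for x y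
    by (rule closure_closed_under[where f="(+)", OF _ add that]) (intro continuous_intros)
  have multD: "x * y \<in> ?D" if "x \<in> ?D" "y \<in> ?D" for x y
    by (rule closure_closed_under[where f="(*)", OF _ mult that]) (intro continuous_intros)
  have scaleD: "scaleR r x \<in> ?D" if "x \<in> ?D" for r x
  proof (rule closure_closed_under[where f=scaleR, of \<rat> P])
    show "continuous_on UNIV (\<lambda>p. scaleR (fst p) (snd p :: 'a))" by (intro continuous_intros)
    show "scaleR q y \<in> P" if "q \<in> \<rat>" "y \<in> P" for q y
      using that rat by (auto elim: Rats_cases)
  qed (simp_all add: Rats_closure_real that)
  have adjD: "adj x \<in> ?D" if "x \<in> ?D" for x
    by (rule closure_invariant[OF linear_continuous_on[OF bounded_linear_adj[OF cs]] assms(5) that])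
  have iD: "sc \<i> x \<in> ?D" if "x \<in> ?D" for x
    by (rule closure_invariant[OF linear_continuous_on[OF bounded_linear_sc[OF cs]] assms(6) that])
  have scD: "sc c x \<in> ?D" if "x \<in> ?D" for c x
    unfolding sc_eq_Re_Im[OF cs, of c x] using that by (intro addD scaleD iD)
  obtain x where "x \<in> P" using assms(2) by blast
  then have "0 \<in> ?D" using scaleD[of x 0] closure_subset by fastforce
  then show ?thesis
    unfolding csub_def using addD multD adjD scD by auto
qed

lemma invariant_of_onorm_approx:
  assumes "closed D" and f: "bounded_linear f"
    and approx: "\<And>e. e > 0 \<Longrightarrow> \<exists>g. bounded_linear g \<and> g ` D \<subseteq> D \<and> onorm (\<lambda>x. f x - g x) < e"
  shows "f ` D \<subseteq> D"
proof
  fix y assume "y \<in> f ` D"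
  then obtain x where x: "x \<in> D" "y = f x" by blast
  have nx: "0 < norm x + 1" by (simp add: add_nonneg_pos)
  have "f x \<in> closure D"
    unfolding closure_approachable
  proof (intro allI impI)
    fix e :: real assume e: "e > 0"
    then obtain g where g: "bounded_linear g" "g ` D \<subseteq> D"
        and close: "onorm (\<lambda>x. f x - g x) < e / (norm x + 1)"
      using approx[of "e / (norm x + 1)"] nx by auto
    have "dist (g x) (f x) \<le> onorm (\<lambda>x. f x - g x) * norm x"
      using onorm[OF bounded_linear_sub[OF f g(1)]] by (simp add: dist_norm norm_minus_commute)
    also have "\<dots> \<le> e / (norm x + 1) * norm x"
      using close by (intro mult_right_mono) auto
    also have "\<dots> < e" using e nx by (simp add: field_simps)
    finally show "\<exists>z\<in>D. dist z (f x) < e" using g(2) x(1) by blast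
  qed
  then show "y \<in> D" using x \<open>closed D\<close> by simp
qed

lemma left_action_invariant_of_dense:
  assumes "closed D" and "bounded_linear (fst m)"
    and C: "\<And>c. c \<in> C \<Longrightarrow> bounded_linear (fst c) \<and> fst c ` D \<subseteq> D"
    and dense: "\<And>e. e > 0 \<Longrightarrow> \<exists>c\<in>C. mdist m c < e"
  shows "fst m ` D \<subseteq> D"
proof (rule invariant_of_onorm_approx[OF assms(1,2)])
  fix e :: real assume "e > 0"
  then obtain c where "c \<in> C" "onorm (\<lambda>x. fst m x - fst c x) < e"
    using dense[OF \<open>e > 0\<close>] by (auto simp: mdist_def mnorm_def)
  then show "\<exists>g. bounded_linear g \<and> g ` D \<subseteq> D \<and> onorm (\<lambda>x. fst m x - g x) < e"
    using C by blast
qed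

lemma right_action_invariant_of_adjoint:
  assumes "cstar_algebra sc adj" and "adj ` D \<subseteq> D" and "fst (madj adj m) ` D \<subseteq> D"
  shows "snd m ` D \<subseteq> D"
proof -
  have "adj (adj y) = y" for y using assms(1) unfolding cstar_algebra_def by metis
  then have "snd m x = adj (fst (madj adj m) (adj x))" for x by (simp add: madj_def)
  then show ?thesis using assms(2,3) by blast
qed

lemma exists_separable_csub_invariant:
  fixes F :: "('a::{banach,real_normed_algebra} \<Rightarrow> 'a) set"
  assumes cs: "cstar_algebra sc adj" and "G \<noteq> {}" "countable G" "countable F"
    and F: "\<And>f. f \<in> F \<Longrightarrow> bounded_linear f"
  shows "\<exists>D. csub sc adj D \<and> separable_set D \<and> G \<subseteq> D \<and> (\<forall>f\<in>F. f ` D \<subseteq> D)"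
proof -
  define U where "U = {adj, sc \<i>} \<union> range (\<lambda>q. scaleR (of_rat q)) \<union> F"
  define B where "B = {(+), (*)} \<union> (\<lambda>f x _. f x) ` U"
  let ?P = "generated B G"
  have add: "x + y \<in> ?P" and mult: "x * y \<in> ?P" if "x \<in> ?P" "y \<in> ?P" for x y
    using generated_closed[of _ B, OF _ that] by (simp_all add: B_def)
  have unary: "f x \<in> ?P" if "f \<in> U" "x \<in> ?P" for f x
    using generated_closed[of "\<lambda>x _. f x" B, OF _ that(2,2)] that(1) by (simp add: B_def)
  have "csub sc adj (closure ?P)"
  proof (rule csub_closure[OF cs _ add mult])
    show "?P \<noteq> {}" using assms(2) generated_superset[of G B] by blast
    show "adj ` ?P \<subseteq> ?P" "sc \<i> ` ?P \<subseteq> ?P" using unary by (auto simp: U_def)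
    show "scaleR (of_rat q) x \<in> ?P" if "x \<in> ?P" for q x
      using unary[of "scaleR (of_rat q)" x] that by (simp add: U_def)
  qed
  moreover have "countable ?P"
    using assms(3,4) by (intro countable_generated) (auto simp: B_def U_def)
  then have "separable_set (closure ?P)"
    unfolding separable_set_def by (meson closure_subset order_refl)
  moreover have "f ` closure ?P \<subseteq> closure ?P" if "f \<in> F" for f
  proof -
    have "f ` ?P \<subseteq> ?P" using unary[of f] that by (auto simp: U_def)
    then show ?thesis using closure_invariant[OF linear_continuous_on[OF F[OF that]]] by blast
  qed
  ultimately show ?thesis
    using generated_superset[of G B] closure_subset by blast
qed

theorem mainTheorem10:
  fixes sc :: "complex \<Rightarrow> 'a::{banach,real_normed_algebra} \<Rightarrow> 'a"
    and adj :: "'a \<Rightarrow> 'a"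
    and L :: "'a mult set"
  assumes "cstar_algebra sc adj"
    and "sigma_unital adj"
    and "msub sc adj L"
    and "mseparable L"
  shows "\<exists>D. csub sc adj D \<and> separable_set D \<and> contains_approx_unit adj D \<and>
             L \<subseteq> induced_mult D ` multipliers D"
proof -
  from assms(2) obtain u :: "nat \<Rightarrow> 'a" where u: "\<And>n. positive_elem adj (u n) \<and> norm (u n) \<le> 1"
    and auL: "\<And>x. (\<lambda>n. u n * x) \<longlonglongrightarrow> x" and auR: "\<And>x. (\<lambda>n. x * u n) \<longlonglongrightarrow> x"
    unfolding sigma_unital_def by blast
  from assms(4) obtain C where "countable C" and CL: "C \<subseteq> L"
    and dense: "\<And>m e. m \<in> L \<Longrightarrow> e > 0 \<Longrightarrow> \<exists>c\<in>C. mdist m c < e"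
    unfolding mseparable_def by blast
  have LM: "L \<subseteq> multipliers UNIV" and Ladj: "\<And>m. m \<in> L \<Longrightarrow> madj adj m \<in> L"
    using assms(3) unfolding msub_def by blast+
  have bl: "m \<in> L \<Longrightarrow> bounded_linear (fst m)" for m
    using bounded_linear_multiplier[OF auL] LM by blast
  have "bounded_linear f" if "f \<in> fst ` C" for f using that CL bl by auto
  with \<open>countable C\<close> obtain D where D: "csub sc adj D" "separable_set D" "range u \<subseteq> D"
      "\<forall>f\<in>fst ` C. f ` D \<subseteq> D"
    using exists_separable_csub_invariant[OF assms(1), of "range u" "fst ` C"] by auto
  have fstD: "fst m ` D \<subseteq> D" if "m \<in> L" for m
  proof (rule left_action_invariant_of_dense[OF _ bl[OF that] _ dense[OF that]])
    show "closed D" using D(1) unfolding csub_def by blast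
    show "bounded_linear (fst c) \<and> fst c ` D \<subseteq> D" if "c \<in> C" for c
      using that D(4) CL bl by blast
  qed
  have "adj ` D \<subseteq> D" using D(1) unfolding csub_def by blast
  then have "m \<in> induced_mult D ` multipliers D" if "m \<in> L" for m
    using that LM fstD right_action_invariant_of_adjoint[OF assms(1)] Ladj
    by (intro multiplier_in_induced_image[OF auL auR D(3)]) auto
  then have "L \<subseteq> induced_mult D ` multipliers D" by blast
  then show ?thesis using D contains_approx_unit_seq[OF u D(3) auL auR] by blast
qed

end
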